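(* Let $S$ be the standard form on $\mathbb{R}^{2m}$. A closed set $G\subset\mathbb{R}^{2m}$ is a linear subspace of $\mathbb{R}^{2m}$ belonging to $\mathcal{M}(S)$ and strictly $S$-monotone if and only if $G=\operatorname{graph}f$, where $f(u)=Au$, $u\in\mathbb{R}^m$, for some positive-definite $m\times m$ matrix $A$.
   Context: Standard form on $\mathbb{R}^{2m}$: $S((r,s),(u,v)):=\langle s,u\rangle+\langle r,v\rangle$, $r,s,u,v\in\mathbb{R}^m$. $G$ is $S$-monotone if $S(x-y,x-y)\ge0$ for $x,y\in G$; strictly $S$-monotone if $S(x-y,x-y)>0$ for all $x\ne y$ in $G$; maximal $S$-monotone if not a strict subset of another $S$-monotone set; $\mathcal{M}(S)$ = family of maximal $S$-monotone sets. An $m\times m$ real matrix $A$ (possibly non-symmetric) is positive-definite if $\langle r,Ar\rangle>0$ for all $r\ne0$. *)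

theory Defs
  imports "HOL-Analysis.Analysis"
begin

definition Sform :: "((real^'m) \<times> (real^'m)) \<Rightarrow> ((real^'m) \<times> (real^'m)) \<Rightarrow> real" where
  "Sform x y = (snd x \<bullet> fst y) + (fst x \<bullet> snd y)"

definition S_monotone :: "((real^'m) \<times> (real^'m)) set \<Rightarrow> bool" where
  "S_monotone G \<longleftrightarrow> (\<forall>x\<in>G. \<forall>y\<in>G. Sform (x - y) (x - y) \<ge> 0)"

definition strictly_S_monotone :: "((real^'m) \<times> (real^'m)) set \<Rightarrow> bool" where
  "strictly_S_monotone G \<longleftrightarrow> (\<forall>x\<in>G. \<forall>y\<in>G. x \<noteq> y \<longrightarrow> Sform (x - y) (x - y) > 0)"

definition maximal_S_monotone_sets :: "((real^'m) \<times> (real^'m)) set set" where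
  "maximal_S_monotone_sets = {G. S_monotone G \<and> \<not> (\<exists>H. S_monotone H \<and> G \<subset> H)}"

definition positive_definite :: "real^'m^'m \<Rightarrow> bool" where
  "positive_definite A \<longleftrightarrow> (\<forall>r. r \<noteq> 0 \<longrightarrow> r \<bullet> (A *v r) > 0)"

definition graph :: "(real^'m \<Rightarrow> real^'m) \<Rightarrow> ((real^'m) \<times> (real^'m)) set" where
  "graph f = {(u, f u) | u. True}"

end

theory Submission
  imports Defs
begin

text \<open>
  On a pair \<open>x = (u, s)\<close> the quadratic form is \<open>Sform x x = 2 (u \<bullet> s)\<close>, so S-monotonicity is
  ordinary monotonicity of the relation \<open>u \<mapsto> s\<close>. Strict monotonicity makes a set
  single-valued, and maximality makes a monotone subspace total: if its domain missed a
  direction, moving all values along a vector \<open>w\<close> orthogonal to the domain would keep it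
  monotone. Hence such a subspace is the graph of a linear map \<open>A\<close>, and strict monotonicity
  of the graph is positive definiteness of \<open>A\<close>. Conversely, the graph of any linear map is
  maximal among monotone sets: a point \<open>(r, s)\<close> off the graph fails monotonicity against
  \<open>(r + t d, A (r + t d))\<close>, \<open>d = s - A r\<close>, for small \<open>t > 0\<close>.
\<close>

lemma Sform_self: "Sform x x = 2 * (fst x \<bullet> snd x)"
  by (simp add: Sform_def inner_commute)

lemma mem_graph_iff: "x \<in> graph f \<longleftrightarrow> snd x = f (fst x)"
  by (cases x) (auto simp: graph_def)

lemma strictly_S_monotone_imp_S_monotone:
  "strictly_S_monotone G \<Longrightarrow> S_monotone G"
  unfolding strictly_S_monotone_def S_monotone_def
  by (metis diff_self order_le_less Sform_self fst_zero inner_zero_left mult_zero_right)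

lemma strictly_S_monotone_single_valued:
  assumes "strictly_S_monotone G" "(u, s) \<in> G" "(u, t) \<in> G"
  shows "s = t"
proof (rule ccontr)
  assume "s \<noteq> t"
  then have "Sform ((u, s) - (u, t)) ((u, s) - (u, t)) > 0"
    using assms unfolding strictly_S_monotone_def by blast
  then show False
    by (simp add: Sform_def)
qed

lemma S_monotone_shift_orthogonal:
  assumes "S_monotone G" and orth: "\<And>x. x \<in> G \<Longrightarrow> fst x \<bullet> w = 0"
  shows "S_monotone {x + (0, c *\<^sub>R w) | x c. x \<in> G}"
  unfolding S_monotone_def
proof (intro ballI)
  fix x' y' assume "x' \<in> {x + (0, c *\<^sub>R w) | x c. x \<in> G}" "y' \<in> {x + (0, c *\<^sub>R w) | x c. x \<in> G}"
  then obtain x y c d where x': "x' = x + (0, c *\<^sub>R w)" "x \<in> G"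
    and y': "y' = y + (0, d *\<^sub>R w)" "y \<in> G"
    by blast
  have "(fst x - fst y) \<bullet> (snd x - snd y + (c - d) *\<^sub>R w)
      = (fst x - fst y) \<bullet> (snd x - snd y) + (c - d) * (fst x \<bullet> w - fst y \<bullet> w)"
    by (simp add: algebra_simps inner_diff_left inner_add_right)
  also have "\<dots> = (fst x - fst y) \<bullet> (snd x - snd y)"
    using orth x' y' by simp
  also have "\<dots> \<ge> 0"
    using \<open>S_monotone G\<close> x' y' by (simp add: S_monotone_def Sform_self)
  finally show "0 \<le> Sform (x' - y') (x' - y')"
    using x' y' by (simp add: Sform_self algebra_simps)
qed

lemma maximal_strictly_S_monotone_subspace_total:
  assumes "subspace G" "G \<in> maximal_S_monotone_sets" "strictly_S_monotone G"
  shows "fst ` G = UNIV"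
proof (rule ccontr)
  assume "fst ` G \<noteq> UNIV"
  moreover have "span (fst ` G) = fst ` G"
    using \<open>subspace G\<close> linear_fst linear_subspace_image span_eq_iff by blast
  ultimately have proper: "span (fst ` G) \<subset> span UNIV"
    by (metis psubsetI span_UNIV subset_UNIV)
  obtain w where "w \<noteq> 0" and w: "\<And>y. y \<in> span (fst ` G) \<Longrightarrow> orthogonal w y"
    using orthogonal_to_subspace_exists_gen[OF proper] by blast
  define H where "H = {x + (0, c *\<^sub>R w) | x c. x \<in> G}"
  have "S_monotone H"
    unfolding H_def
  proof (rule S_monotone_shift_orthogonal)
    show "S_monotone G"
      using assms(3) by (rule strictly_S_monotone_imp_S_monotone)
    show "fst x \<bullet> w = 0" if "x \<in> G" for x
      using w[of "fst x"] that by (simp add: span_base orthogonal_def inner_commute)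
  qed
  moreover have "G \<subseteq> H"
  proof
    fix x assume "x \<in> G"
    moreover have "x = x + (0, 0 *\<^sub>R w)"
      by (simp add: zero_prod_def)
    ultimately show "x \<in> H"
      unfolding H_def by blast
  qed
  moreover have "(0, w) \<in> H - G"
  proof
    have "(0, 0) \<in> G"
      using \<open>subspace G\<close> subspace_0 by (metis zero_prod_def)
    then have "(0, 0) + (0, 1 *\<^sub>R w) \<in> H"
      unfolding H_def by blast
    then show "(0, w) \<in> H"
      by simp
    show "(0, w) \<notin> G"
      using strictly_S_monotone_single_valued[OF assms(3) \<open>(0, 0) \<in> G\<close>] \<open>w \<noteq> 0\<close> by blast
  qed
  ultimately show False
    using assms(2) unfolding maximal_S_monotone_sets_def by blast
qed

lemma subspace_single_valued_total_eq_graph: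
  fixes G :: "((real^'m) \<times> (real^'m)) set"
  assumes "subspace G" and single_valued: "\<And>u s t. (u, s) \<in> G \<Longrightarrow> (u, t) \<in> G \<Longrightarrow> s = t"
    and "fst ` G = UNIV"
  obtains A :: "real^'m^'m" where "G = graph (\<lambda>u. A *v u)"
proof -
  define f where "f u = (SOME s. (u, s) \<in> G)" for u
  have f_in: "(u, f u) \<in> G" for u
    using \<open>fst ` G = UNIV\<close> unfolding f_def by (metis (mono_tags) UNIV_I image_iff prod.collapse someI)
  have f_eq: "s = f u" if "(u, s) \<in> G" for u s
    using single_valued[OF that f_in] .
  have "linear f"
  proof
    show "f (x + y) = f x + f y" for x y
    proof -
      have "(x + y, f x + f y) \<in> G"
        using subspace_add[OF \<open>subspace G\<close> f_in[of x] f_in[of y]] by simp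
      then show ?thesis
        by (rule f_eq[symmetric])
    qed
    show "f (c *\<^sub>R x) = c *\<^sub>R f x" for c x
    proof -
      have "(c *\<^sub>R x, c *\<^sub>R f x) \<in> G"
        using subspace_scale[OF \<open>subspace G\<close> f_in[of x]] by simp
      then show ?thesis
        by (rule f_eq[symmetric])
    qed
  qed
  then have "G = graph (\<lambda>u. matrix f *v u)"
    using f_in f_eq by (auto simp: mem_graph_iff)
  then show thesis ..
qed

lemma strictly_S_monotone_graph_iff:
  "strictly_S_monotone (graph (\<lambda>u. A *v u)) \<longleftrightarrow> positive_definite A"
proof -
  have "Sform ((u, A *v u) - (v, A *v v)) ((u, A *v u) - (v, A *v v)) = 2 * ((u - v) \<bullet> (A *v (u - v)))"
    for u v by (simp add: Sform_self matrix_vector_mult_diff_distrib)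
  then have "strictly_S_monotone (graph (\<lambda>u. A *v u)) \<longleftrightarrow> (\<forall>u v. u \<noteq> v \<longrightarrow> (u - v) \<bullet> (A *v (u - v)) > 0)"
    unfolding strictly_S_monotone_def graph_def by auto
  also have "\<dots> \<longleftrightarrow> positive_definite A"
    unfolding positive_definite_def by (metis diff_zero eq_iff_diff_eq_0)
  finally show ?thesis .
qed

lemma subspace_graph_matrix: "subspace (graph (\<lambda>u. A *v u))"
  unfolding subspace_def graph_def
  by (auto simp: zero_prod_def matrix_vector_right_distrib matrix_vector_mult_scaleR intro!: exI[of _ 0])

lemma S_monotone_superset_of_graph:
  assumes "S_monotone H" "graph (\<lambda>u. A *v u) \<subseteq> H" "(r, s) \<in> H"
  shows "s = A *v r"
proof (rule ccontr)
  define d where "d = s - A *v r"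
  assume "s \<noteq> A *v r"
  then have "d \<bullet> d > 0"
    unfolding d_def by simp
  \<comment> \<open>Any \<open>t > 0\<close> with \<open>t (d \<bullet> A d) < d \<bullet> d\<close> makes \<open>(r + t d, A (r + t d))\<close> violate monotonicity.\<close>
  define t where "t = (d \<bullet> d) / (2 * (\<bar>d \<bullet> (A *v d)\<bar> + 1))"
  have "t > 0"
    unfolding t_def using \<open>d \<bullet> d > 0\<close> by simp
  have "t * (d \<bullet> (A *v d)) \<le> t * \<bar>d \<bullet> (A *v d)\<bar>"
    using \<open>t > 0\<close> by (simp add: mult_left_mono)
  also have "\<dots> < (d \<bullet> d) / 2"
    unfolding t_def using \<open>d \<bullet> d > 0\<close> by (simp add: field_simps)
  finally have gap: "0 < d \<bullet> d - t * (d \<bullet> (A *v d))"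
    using \<open>d \<bullet> d > 0\<close> by linarith
  define u where "u = r + t *\<^sub>R d"
  have "(u, A *v u) \<in> H"
    using assms(2) by (auto simp: mem_graph_iff)
  then have "0 \<le> Sform ((r, s) - (u, A *v u)) ((r, s) - (u, A *v u))"
    using assms(1,3) unfolding S_monotone_def by blast
  also have "\<dots> = - 2 * t * (d \<bullet> d - t * (d \<bullet> (A *v d)))"
    unfolding Sform_self u_def d_def
    by (simp add: matrix_vector_right_distrib matrix_vector_mult_scaleR algebra_simps)
  finally show False
    using mult_pos_pos[OF \<open>t > 0\<close> gap] by simp
qed

lemma graph_in_maximal_S_monotone_sets:
  assumes "S_monotone (graph (\<lambda>u. A *v u))"
  shows "graph (\<lambda>u. A *v u) \<in> maximal_S_monotone_sets"
proof -
  have "H \<subseteq> graph (\<lambda>u. A *v u)" if "S_monotone H" "graph (\<lambda>u. A *v u) \<subseteq> H" for H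
  proof
    fix x assume "x \<in> H"
    then have "snd x = A *v fst x"
      using S_monotone_superset_of_graph[OF that, of "fst x" "snd x"] by simp
    then show "x \<in> graph (\<lambda>u. A *v u)"
      by (simp add: mem_graph_iff)
  qed
  then show ?thesis
    using assms unfolding maximal_S_monotone_sets_def by auto
qed

theorem lemma13:
  fixes G :: "((real^'m) \<times> (real^'m)) set"
  assumes "closed G"
  shows "(subspace G \<and> G \<in> maximal_S_monotone_sets \<and> strictly_S_monotone G) \<longleftrightarrow>
         (\<exists>A :: real^'m^'m. positive_definite A \<and> G = graph (\<lambda>u. A *v u))"
proof
  assume G: "subspace G \<and> G \<in> maximal_S_monotone_sets \<and> strictly_S_monotone G"
  then have "fst ` G = UNIV"
    using maximal_strictly_S_monotone_subspace_total by blast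
  then obtain A :: "real^'m^'m" where "G = graph (\<lambda>u. A *v u)"
    using G strictly_S_monotone_single_valued subspace_single_valued_total_eq_graph by blast
  then show "\<exists>A. positive_definite A \<and> G = graph (\<lambda>u. A *v u)"
    using G strictly_S_monotone_graph_iff by blast
next
  assume "\<exists>A. positive_definite A \<and> G = graph (\<lambda>u. A *v u)"
  then obtain A where "positive_definite A" and G: "G = graph (\<lambda>u. A *v u)"
    by blast
  then have "strictly_S_monotone G"
    using strictly_S_monotone_graph_iff by blast
  then show "subspace G \<and> G \<in> maximal_S_monotone_sets \<and> strictly_S_monotone G"
    using G subspace_graph_matrix graph_in_maximal_S_monotone_sets strictly_S_monotone_imp_S_monotone
    by blast
qed

end
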